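(* Let $\mathcal{G}\subset\mathcal{S}$ with harmonic analogue $\mathcal{G}_H^0$. Suppose $p$ is a function of $n$ such that the Taylor coefficients $a_n(f)$ of every $f\in\mathcal{G}$ satisfy $|a_n(f)|\le p(n)$ for $n=2,3,\dots$. Then: (a) for every $f=h+\bar g\in\mathcal{G}_H^0$, the Taylor coefficients $A_n(f)$ of $h$ and $B_n(f)$ of $g$ satisfy $\big||A_n(f)|-|B_n(f)|\big|\le p(n)$ for $n=2,3,\dots$; (b) if $h_0\in\mathcal{G}$ has Taylor coefficients with $|a_n(h_0)|=p(n)$ for all $n=2,3,\dots$, then for an analytic function $g_0$ in $\mathbb{D}$, the harmonic function $f_0=h_0+\bar g_0$ belongs to $\mathcal{G}_H^0$ if and only if $g_0\equiv0$.
   Context: $\mathbb{D}$ is the open unit disk. $\mathcal{S}$ is the class of analytic univalent functions $f$ in $\mathbb{D}$ with $f(0)=0$, $f'(0)=1$. For $\mathcal{G}\subset\mathcal{S}$, its harmonic analogue $\mathcal{G}_H^0$ is the class of harmonic functions $f=h+\bar g$ ($h,g$ analytic in $\mathbb{D}$) such that $h+\epsilon g\in\mathcal{G}$ for every $\epsilon\in\mathbb{C}$ with $|\epsilon|=1$. *)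

theory Defs
  imports "HOL-Complex_Analysis.Complex_Analysis"
begin

definition classS :: "(complex \<Rightarrow> complex) set" where
  "classS = {f. f analytic_on ball 0 1 \<and> inj_on f (ball 0 1) \<and> f 0 = 0 \<and> deriv f 0 = 1}"

definition taylor_coeff :: "(complex \<Rightarrow> complex) \<Rightarrow> nat \<Rightarrow> complex" where
  "taylor_coeff f n = (deriv ^^ n) f 0 / of_nat (fact n)"

text \<open>Harmonic analogue G_H^0 of a class G: pairs (h,g) of analytic functions on the disk,
  representing f = h + conj g, such that h + eps*g belongs to G (as a function on the disk)
  for every unimodular eps.\<close>
definition harmonic_analogue :: "(complex \<Rightarrow> complex) set \<Rightarrow> ((complex \<Rightarrow> complex) \<times> (complex \<Rightarrow> complex)) set" where
  "harmonic_analogue G = {(h, g). h analytic_on ball 0 1 \<and> g analytic_on ball 0 1 \<and>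
     (\<forall>\<epsilon>::complex. norm \<epsilon> = 1 \<longrightarrow> (\<exists>F\<in>G. \<forall>z\<in>ball 0 1. F z = h z + \<epsilon> * g z))}"

end

theory Submission
  imports Defs
begin

text \<open>Write \<open>A\<^sub>n, B\<^sub>n\<close> for the coefficients of \<open>h, g\<close>. The coefficients of \<open>h + \<epsilon> g\<close> are
  \<open>A\<^sub>n + \<epsilon> B\<^sub>n\<close>, and a suitable unimodular \<open>\<epsilon>\<close> aligns \<open>\<epsilon> B\<^sub>n\<close> with \<open>A\<^sub>n\<close>, so membership in the
  harmonic analogue even gives \<open>|A\<^sub>n| + |B\<^sub>n| \<le> p(n)\<close>. If \<open>|A\<^sub>n| = p(n)\<close>, this forces \<open>B\<^sub>n = 0\<close>
  for \<open>n \<ge> 2\<close>; comparing \<open>h + g\<close> and \<open>h - g\<close>, both normalized, gives \<open>B\<^sub>0 = B\<^sub>1 = 0\<close>.\<close>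

lemma higher_deriv_add_cmult_within_open:
  assumes "open S" "z \<in> S" "h holomorphic_on S" "g holomorphic_on S" "F holomorphic_on S"
    and "\<And>w. w \<in> S \<Longrightarrow> F w = h w + c * g w"
  shows "(deriv ^^ n) F z = (deriv ^^ n) h z + c * (deriv ^^ n) g z"
proof -
  have cg: "(\<lambda>w. c * g w) holomorphic_on S"
    using assms(4) by (intro holomorphic_intros)
  have "(\<lambda>w. h w + c * g w) holomorphic_on S"
    using assms(3) cg by (rule holomorphic_on_add)
  then have "(deriv ^^ n) F z = (deriv ^^ n) (\<lambda>w. h w + c * g w) z"
    using assms by (intro higher_deriv_transform_within_open[where S = S]) auto
  also have "\<dots> = (deriv ^^ n) h z + (deriv ^^ n) (\<lambda>w. c * g w) z"
    using assms cg by (intro higher_deriv_add) auto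
  also have "(deriv ^^ n) (\<lambda>w. c * g w) z = c * (deriv ^^ n) g z"
    using assms by (intro higher_deriv_cmult) auto
  finally show ?thesis .
qed

lemma taylor_coeff_add_cmult:
  assumes "h analytic_on ball 0 1" "g analytic_on ball 0 1" "F analytic_on ball 0 1"
    and "\<forall>z\<in>ball 0 1. F z = h z + c * g z"
  shows "taylor_coeff F n = taylor_coeff h n + c * taylor_coeff g n"
  using higher_deriv_add_cmult_within_open[of "ball 0 1" 0 h g F c n] assms
  by (simp add: taylor_coeff_def analytic_on_open add_divide_distrib)

lemma norm_add_norm_le_if_rotations_bounded:
  fixes a b :: complex
  assumes "\<And>e. norm e = 1 \<Longrightarrow> norm (a + e * b) \<le> P"
  shows "norm a + norm b \<le> P"
proof (cases "a = 0 \<or> b = 0")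
  case True
  then show ?thesis using assms[of 1] by auto
next
  case False
  define e where "e = sgn a * cnj (sgn b)"
  have "norm e = 1" using False by (simp add: e_def norm_mult norm_sgn)
  have "cnj (sgn b) * b = of_real (norm b)"
    using False by (metis divide_conv_cnj divide_divide_eq_right mult.commute
      nonzero_mult_div_cancel_left norm_sgn sgn_eq)
  moreover have "a = sgn a * of_real (norm a)"
    using False by (simp add: sgn_eq)
  ultimately have "a + e * b = sgn a * of_real (norm a + norm b)"
    by (metis e_def distrib_left mult.assoc of_real_add)
  then have "norm (a + e * b) = norm a + norm b"
    using False by (simp add: norm_mult norm_sgn flip: of_real_add)
  with assms \<open>norm e = 1\<close> show ?thesis by metis
qed

lemma harmonic_analogue_coeff_bound:
  assumes "G \<subseteq> classS" "\<forall>f\<in>G. norm (taylor_coeff f n) \<le> P"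
    and "(h, g) \<in> harmonic_analogue G"
  shows "norm (taylor_coeff h n) + norm (taylor_coeff g n) \<le> P"
proof (rule norm_add_norm_le_if_rotations_bounded)
  fix e :: complex assume "norm e = 1"
  with assms(3) obtain F where F: "F \<in> G" "\<forall>z\<in>ball 0 1. F z = h z + e * g z"
    and hg: "h analytic_on ball 0 1" "g analytic_on ball 0 1"
    by (auto simp: harmonic_analogue_def)
  have "F analytic_on ball 0 1"
    using F(1) assms(1) by (auto simp: classS_def)
  with hg F(2) have "taylor_coeff F n = taylor_coeff h n + e * taylor_coeff g n"
    by (intro taylor_coeff_add_cmult)
  with F(1) assms(2) show "norm (taylor_coeff h n + e * taylor_coeff g n) \<le> P"
    by metis
qed

lemma harmonic_analogue_classS_higher_deriv_eq_0:
  assumes "G \<subseteq> classS" "(h, g) \<in> harmonic_analogue G" "n < 2"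
  shows "(deriv ^^ n) g 0 = 0"
proof -
  have coeff: "(deriv ^^ n) h 0 + e * (deriv ^^ n) g 0 = (if n = 0 then 0 else 1)"
    if "norm e = 1" for e
  proof -
    from assms(2) that obtain F where F: "F \<in> G" "\<forall>z\<in>ball 0 1. F z = h z + e * g z"
      and hg: "h analytic_on ball 0 1" "g analytic_on ball 0 1"
      by (auto simp: harmonic_analogue_def)
    have "F \<in> classS" using F(1) assms(1) by auto
    then have "F analytic_on ball 0 1" "(deriv ^^ n) F 0 = (if n = 0 then 0 else 1)"
      using \<open>n < 2\<close> by (auto simp: classS_def less_2_cases_iff)
    moreover have "(deriv ^^ n) F 0 = (deriv ^^ n) h 0 + e * (deriv ^^ n) g 0"
      using hg F(2) \<open>F analytic_on ball 0 1\<close>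
      by (intro higher_deriv_add_cmult_within_open[where S = "ball 0 1"]) (auto simp: analytic_on_open)
    ultimately show ?thesis by (simp only:)
  qed
  from coeff[of 1] coeff[of "-1"]
  have "(deriv ^^ n) h 0 + (deriv ^^ n) g 0 = (deriv ^^ n) h 0 - (deriv ^^ n) g 0"
    by simp
  then show ?thesis by auto
qed

lemma harmonic_analogue_eq_0_if_coeffs_extremal:
  assumes "G \<subseteq> classS" "\<forall>f\<in>G. \<forall>n\<ge>2. norm (taylor_coeff f n) \<le> norm (taylor_coeff h n)"
    and "(h, g) \<in> harmonic_analogue G"
  shows "\<forall>z\<in>ball 0 1. g z = 0"
proof -
  have "(deriv ^^ n) g 0 = 0" for n
  proof (cases "n < 2")
    case False
    with assms have "norm (taylor_coeff h n) + norm (taylor_coeff g n) \<le> norm (taylor_coeff h n)"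
      by (intro harmonic_analogue_coeff_bound) auto
    then show ?thesis by (simp add: taylor_coeff_def)
  qed (use assms harmonic_analogue_classS_higher_deriv_eq_0 in blast)
  moreover have "g holomorphic_on ball 0 1"
    using assms(3) by (simp add: harmonic_analogue_def analytic_on_open)
  ultimately show ?thesis
    by (auto intro: holomorphic_fun_eq_0_on_connected[where z = 0])
qed

theorem theorem2p5:
  fixes G :: "(complex \<Rightarrow> complex) set" and p :: "nat \<Rightarrow> real"
  assumes "G \<subseteq> classS"
    and "\<forall>f\<in>G. \<forall>n\<ge>2. norm (taylor_coeff f n) \<le> p n"
  shows "(\<forall>h g. (h, g) \<in> harmonic_analogue G \<longrightarrow>
            (\<forall>n\<ge>2. \<bar>norm (taylor_coeff h n) - norm (taylor_coeff g n)\<bar> \<le> p n))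
       \<and> (\<forall>h0 g0. h0 \<in> G \<and> (\<forall>n\<ge>2. norm (taylor_coeff h0 n) = p n) \<and> g0 analytic_on ball 0 1 \<longrightarrow>
            ((h0, g0) \<in> harmonic_analogue G \<longleftrightarrow> (\<forall>z\<in>ball 0 1. g0 z = 0)))"
proof (intro conjI allI impI)
  fix h g and n :: nat
  assume "(h, g) \<in> harmonic_analogue G" "n \<ge> 2"
  with assms have "norm (taylor_coeff h n) + norm (taylor_coeff g n) \<le> p n"
    by (intro harmonic_analogue_coeff_bound) auto
  then show "\<bar>norm (taylor_coeff h n) - norm (taylor_coeff g n)\<bar> \<le> p n"
    using norm_ge_zero[of "taylor_coeff h n"] norm_ge_zero[of "taylor_coeff g n"]
    unfolding abs_le_iff by linarith
next
  fix h0 g0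
  assume "h0 \<in> G \<and> (\<forall>n\<ge>2. norm (taylor_coeff h0 n) = p n) \<and> g0 analytic_on ball 0 1"
  moreover from this assms(1) have "h0 analytic_on ball 0 1"
    by (auto simp: classS_def)
  ultimately show "(h0, g0) \<in> harmonic_analogue G \<longleftrightarrow> (\<forall>z\<in>ball 0 1. g0 z = 0)"
    using harmonic_analogue_eq_0_if_coeffs_extremal[of G h0 g0] assms
    by (auto simp: harmonic_analogue_def)
qed

end
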